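(* There is a polynomial $p$ such that for all $n,s\ge1$, with $N=2^n$, the polynomial map $\mathcal{G}^{\mathrm{SSSV}}_{n,\lceil\log_2 s\rceil}$ is a $p(\log s,n)$-$\Sigma\Pi\Sigma$-succinct generator for the class of polynomials $F\in\mathbb{F}[X_1,\ldots,X_N]$ having at most $s$ monomials.
   Context: Let $P(z_1,\ldots,z_n,x_1,\ldots,x_n)=\prod_{i=1}^n(z_ix_i+(1-z_i))$, $Q^{\mathrm{SSV}}_{n,k}(y,z,x)=\sum_{j=1}^k y_jP(z_j,x)$ with $z_j=(z_{j,1},\ldots,z_{j,n})$, and $Q^{\mathrm{SSSV}}_{n,k}=Q^{\mathrm{SSV}}_{n,k}+\prod_{i=1}^n(x_i+1)$. $\mathcal{G}^{\mathrm{SSSV}}_{n,k}(y,z)$ is the coefficient vector of $Q^{\mathrm{SSSV}}_{n,k}$ as a multilinear polynomial in $x$, with coordinates indexed by subsets $S\subseteq[n]$ (monomials $x_S=\prod_{i\in S}x_i$) and identified with $X_1,\ldots,X_N$ via $i-1=\sum_{k\in S}2^{k-1}$. A polynomial map $\mathcal{G}:\mathbb{F}^m\to\mathbb{F}^{2^n}$ is an $s'$-$\Sigma\Pi\Sigma$-succinct generator for a class $\mathcal{D}$ of $N$-variate polynomials if (i) for every $\alpha\in\mathbb{F}^m$ the multilinear polynomial $\sum_S\mathcal{G}_S(\alpha)x_S$ is computed by a multilinear depth-3 $\Sigma\Pi\Sigma$ formula of size at most $s'$, and (ii) for every $F\in\mathcal{D}$, $F\not\equiv0$ iff $F\circ\mathcal{G}\not\equiv0$.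 *)

theory Defs
  imports Complex_Main "HOL-Library.Poly_Mapping"
begin

type_synonym 'a mpoly = "(nat \<Rightarrow>\<^sub>0 nat) \<Rightarrow>\<^sub>0 'a"

definition mVar :: "nat \<Rightarrow> ('a::comm_ring_1) mpoly" where
  "mVar i = Poly_Mapping.single (Poly_Mapping.single i 1) 1"

definition mConst :: "'a::comm_ring_1 \<Rightarrow> 'a mpoly" where
  "mConst c = Poly_Mapping.single 0 c"

definition mpoly_vars :: "('a::zero) mpoly \<Rightarrow> nat set" where
  "mpoly_vars p = (\<Union>m\<in>Poly_Mapping.keys p. Poly_Mapping.keys m)"

definition mpoly_eval :: "(nat \<Rightarrow> 'a::comm_ring_1) \<Rightarrow> 'a mpoly \<Rightarrow> 'a" where
  "mpoly_eval f p = (\<Sum>m\<in>Poly_Mapping.keys p. Poly_Mapping.lookup p m * (\<Prod>i\<in>Poly_Mapping.keys m. f i ^ Poly_Mapping.lookup m i))"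

definition mpoly_subst :: "(nat \<Rightarrow> ('a::comm_ring_1) mpoly) \<Rightarrow> 'a mpoly \<Rightarrow> 'a mpoly" where
  "mpoly_subst g p = (\<Sum>m\<in>Poly_Mapping.keys p. mConst (Poly_Mapping.lookup p m) * (\<Prod>i\<in>Poly_Mapping.keys m. g i ^ Poly_Mapping.lookup m i))"

definition mono_of_set :: "nat set \<Rightarrow> (nat \<Rightarrow>\<^sub>0 nat)" where
  "mono_of_set S = (\<Sum>i\<in>S. Poly_Mapping.single i 1)"

text \<open>An affine linear form c + sum_i l_i x_i is a pair (c, l); a Sigma-Pi-Sigma formula is a
list of product gates, each a list of affine forms.\<close>

type_synonym 'a affine = "'a \<times> (nat \<Rightarrow>\<^sub>0 'a)"
type_synonym 'a spsformula = "'a affine list list"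

definition affine_poly :: "('a::comm_ring_1) affine \<Rightarrow> 'a mpoly" where
  "affine_poly a = mConst (fst a) + (\<Sum>i\<in>Poly_Mapping.keys (snd a). mConst (Poly_Mapping.lookup (snd a) i) * mVar i)"

definition sps_poly :: "('a::comm_ring_1) spsformula \<Rightarrow> 'a mpoly" where
  "sps_poly \<Phi> = (\<Sum>t\<leftarrow>\<Phi>. \<Prod>a\<leftarrow>t. affine_poly a)"

definition sps_multilinear :: "('a::zero) spsformula \<Rightarrow> bool" where
  "sps_multilinear \<Phi> = (\<forall>t\<in>set \<Phi>. \<forall>i<length t. \<forall>j<length t. i \<noteq> j \<longrightarrow>
      Poly_Mapping.keys (snd (t ! i)) \<inter> Poly_Mapping.keys (snd (t ! j)) = {})"

text \<open>Size: one node per product gate, and for each affine form one node plus one per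
variable occurring in it (number of wires into the bottom sum gate).\<close>
definition sps_size :: "('a::zero) spsformula \<Rightarrow> nat" where
  "sps_size \<Phi> = (\<Sum>t\<leftarrow>\<Phi>. 1 + (\<Sum>a\<leftarrow>t. 1 + card (Poly_Mapping.keys (snd a))))"

text \<open>The coordinate S corresponds to the variable X_t (0-based) with
t = sum_{i \<in> S} 2^i, i.e. S = {i<n. bit t i}.\<close>

definition set_of_index :: "nat \<Rightarrow> nat \<Rightarrow> nat set" where
  "set_of_index n t = {i. i < n \<and> bit t i}"

definition gen_compose :: "nat \<Rightarrow> (nat set \<Rightarrow> ('a::comm_ring_1) mpoly) \<Rightarrow> 'a mpoly \<Rightarrow> 'a mpoly" where
  "gen_compose n G F = mpoly_subst (\<lambda>t. if t < 2 ^ n then G (set_of_index n t) else 0) F"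

definition succinct_generator ::
  "nat \<Rightarrow> nat \<Rightarrow> (nat set \<Rightarrow> ('a::comm_ring_1) mpoly) \<Rightarrow> real \<Rightarrow> 'a mpoly set \<Rightarrow> bool" where
  "succinct_generator n m G s' D \<longleftrightarrow>
     (\<forall>S. S \<subseteq> {0..<n} \<longrightarrow> mpoly_vars (G S) \<subseteq> {0..<m}) \<and>
     (\<forall>\<alpha>::nat \<Rightarrow> 'a. \<exists>\<Phi>. sps_multilinear \<Phi> \<and> real (sps_size \<Phi>) \<le> s' \<and>
        sps_poly \<Phi> = (\<Sum>S\<in>Pow {0..<n}. mConst (mpoly_eval \<alpha> (G S)) * (\<Prod>i\<in>S. mVar i))) \<and>
     (\<forall>F\<in>D. F \<noteq> 0 \<longleftrightarrow> gen_compose n G F \<noteq> 0)"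

text \<open>Variables of the generator (0-based): y_j is variable j (j < k), and z_{j,i} is variable
k + j*n + i (j < k, i < n); so m = k + k*n. The x-variables x_i (i < n) are the variables of
the outer polynomial ring, whose coefficients are polynomials in y, z.\<close>

definition zvar :: "nat \<Rightarrow> nat \<Rightarrow> nat \<Rightarrow> nat \<Rightarrow> nat" where
  "zvar n k j i = k + j * n + i"

definition P_poly :: "nat \<Rightarrow> nat \<Rightarrow> nat \<Rightarrow> (('a::comm_ring_1) mpoly) mpoly" where
  "P_poly n k j = (\<Prod>i<n. mConst (mVar (zvar n k j i)) * mVar i + mConst (1 - mVar (zvar n k j i)))"

definition Q_SSV :: "nat \<Rightarrow> nat \<Rightarrow> (('a::comm_ring_1) mpoly) mpoly" where
  "Q_SSV n k = (\<Sum>j<k. mConst (mVar j) * P_poly n k j)"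

definition Q_SSSV :: "nat \<Rightarrow> nat \<Rightarrow> (('a::comm_ring_1) mpoly) mpoly" where
  "Q_SSSV n k = Q_SSV n k + (\<Prod>i<n. mVar i + 1)"

definition G_SSSV :: "nat \<Rightarrow> nat \<Rightarrow> nat set \<Rightarrow> ('a::comm_ring_1) mpoly" where
  "G_SSSV n k S = Poly_Mapping.lookup (Q_SSSV n k) (mono_of_set S)"

text \<open>Polynomials in F[X_1..X_N] (0-based variables X_0..X_{N-1}) with at most s monomials.\<close>
definition sparse_class :: "nat \<Rightarrow> nat \<Rightarrow> ('a::zero) mpoly set" where
  "sparse_class N s = {F. mpoly_vars F \<subseteq> {0..<N} \<and> card (Poly_Mapping.keys F) \<le> s}"

end

theory Submission
  imports Defs
begin

text \<open>Given \<alpha>, the x-polynomial with coefficients \<open>G\<^sup>SSSV(\<alpha>)\<close> is the sum of \<open>k + 1\<close> products of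
  \<open>n\<close> affine forms in disjoint variables, whence succinctness. For the hitting property, a nonzero
  \<open>F\<close> with at most \<open>2\<^sup>k\<close> monomials has a set \<open>T\<close> of at most \<open>k\<close> variables and a monomial \<open>m\<^sub>0\<close> such
  that the monomials of \<open>F\<close> agreeing with \<open>m\<^sub>0\<close> on \<open>T\<close> have nonzero coefficient sum (halve the
  monomials along one distinguishing variable at a time). Enumerate \<open>T = {\<tau> 0, \<dots>, \<tau> (r - 1)}\<close>
  and set \<open>y\<^sub>j = Y\<^sub>j - 1\<close> and \<open>z\<^sub>j\<close> to the binary digits of \<open>\<tau> j\<close>: then the coordinate \<open>\<tau> j\<close> of the
  generator becomes \<open>Y\<^sub>j\<close> and every other coordinate becomes \<open>1\<close>, so \<open>F \<circ> G\<close> specializes to a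
  polynomial whose coefficient at the projection of \<open>m\<^sub>0\<close> is that nonzero sum.\<close>

locale ring_hom =
  fixes \<phi> :: "'a::comm_ring_1 \<Rightarrow> 'b::comm_ring_1"
  assumes hom_add: "\<phi> (a + b) = \<phi> a + \<phi> b"
    and hom_mult: "\<phi> (a * b) = \<phi> a * \<phi> b"
    and hom_one: "\<phi> 1 = 1"
begin

lemma hom_zero [simp]: "\<phi> 0 = 0"
  using hom_add[of 0 0] by simp

lemma hom_uminus: "\<phi> (- a) = - \<phi> a"
  using hom_add[of a "- a"] by (simp add: add_eq_0_iff2)

lemma hom_diff: "\<phi> (a - b) = \<phi> a - \<phi> b"
  using hom_add[of a "- b"] by (simp add: hom_uminus)

lemma hom_sum: "\<phi> (sum g A) = (\<Sum>x\<in>A. \<phi> (g x))"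
  by (induct A rule: infinite_finite_induct) (auto simp: hom_add)

lemma hom_prod: "\<phi> (prod g A) = (\<Prod>x\<in>A. \<phi> (g x))"
  by (induct A rule: infinite_finite_induct) (auto simp: hom_mult hom_one)

lemma hom_power: "\<phi> (a ^ n) = \<phi> a ^ n"
  by (induct n) (auto simp: hom_mult hom_one)

lemmas hom_simps = hom_add hom_mult hom_one hom_diff hom_sum hom_prod hom_power

end

subsection \<open>Evaluation homomorphisms\<close>

definition monom_value :: "(nat \<Rightarrow> 'b::comm_ring_1) \<Rightarrow> (nat \<Rightarrow>\<^sub>0 nat) \<Rightarrow> 'b" where
  "monom_value f m = (\<Prod>i\<in>Poly_Mapping.keys m. f i ^ Poly_Mapping.lookup m i)"

text \<open>Evaluation at \<open>f\<close> after mapping the coefficients by \<open>\<phi>\<close>; both \<open>mpoly_eval\<close>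
  (\<open>\<phi> = id\<close>) and \<open>mpoly_subst\<close> (\<open>\<phi> = mConst\<close>) are instances.\<close>
definition eval_hom :: "('a::comm_ring_1 \<Rightarrow> 'b::comm_ring_1) \<Rightarrow> (nat \<Rightarrow> 'b) \<Rightarrow> 'a mpoly \<Rightarrow> 'b" where
  "eval_hom \<phi> f p = (\<Sum>m\<in>Poly_Mapping.keys p. \<phi> (Poly_Mapping.lookup p m) * monom_value f m)"

lemma monom_value_superset:
  assumes "finite B" "Poly_Mapping.keys m \<subseteq> B"
  shows "monom_value f m = (\<Prod>i\<in>B. f i ^ Poly_Mapping.lookup m i)"
  unfolding monom_value_def
  by (rule prod.mono_neutral_left) (use assms in \<open>auto simp: in_keys_iff\<close>)

lemma monom_value_add: "monom_value f (m + m') = monom_value f m * monom_value f m'"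
proof -
  let ?B = "Poly_Mapping.keys m \<union> Poly_Mapping.keys m'"
  have "monom_value f (m + m') = (\<Prod>i\<in>?B. f i ^ Poly_Mapping.lookup (m + m') i)"
    by (rule monom_value_superset) (use keys_add[of m m'] in auto)
  also have "\<dots> = (\<Prod>i\<in>?B. f i ^ Poly_Mapping.lookup m i) * (\<Prod>i\<in>?B. f i ^ Poly_Mapping.lookup m' i)"
    by (simp add: lookup_add power_add prod.distrib)
  also have "\<dots> = monom_value f m * monom_value f m'"
    by (subst (1 2) monom_value_superset[of ?B]) auto
  finally show ?thesis .
qed

lemma poly_mapping_sum_single: "p = (\<Sum>m\<in>Poly_Mapping.keys p. Poly_Mapping.single m (Poly_Mapping.lookup p m))"
  by (rule poly_mapping_eqI) (simp add: lookup_sum lookup_single when_def in_keys_iff)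

context ring_hom
begin

lemma eval_hom_superset:
  assumes "finite A" "Poly_Mapping.keys p \<subseteq> A"
  shows "eval_hom \<phi> f p = (\<Sum>m\<in>A. \<phi> (Poly_Mapping.lookup p m) * monom_value f m)"
  unfolding eval_hom_def
  by (rule sum.mono_neutral_left) (use assms in \<open>auto simp: in_keys_iff\<close>)

lemma eval_hom_add: "eval_hom \<phi> f (p + q) = eval_hom \<phi> f p + eval_hom \<phi> f q"
proof -
  let ?A = "Poly_Mapping.keys p \<union> Poly_Mapping.keys q"
  have "eval_hom \<phi> f (p + q) = (\<Sum>m\<in>?A. \<phi> (Poly_Mapping.lookup (p + q) m) * monom_value f m)"
    by (rule eval_hom_superset) (use keys_add[of p q] in auto)
  also have "\<dots> = (\<Sum>m\<in>?A. \<phi> (Poly_Mapping.lookup p m) * monom_value f m)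
      + (\<Sum>m\<in>?A. \<phi> (Poly_Mapping.lookup q m) * monom_value f m)"
    by (simp add: lookup_add hom_add distrib_right sum.distrib)
  also have "\<dots> = eval_hom \<phi> f p + eval_hom \<phi> f q"
    by (subst (1 2) eval_hom_superset[of ?A]) auto
  finally show ?thesis .
qed

lemma eval_hom_zero: "eval_hom \<phi> f 0 = 0"
  by (simp add: eval_hom_def)

lemma eval_hom_sum: "eval_hom \<phi> f (sum g A) = (\<Sum>x\<in>A. eval_hom \<phi> f (g x))"
  by (induct A rule: infinite_finite_induct) (simp_all add: eval_hom_add eval_hom_zero)

lemma eval_hom_single: "eval_hom \<phi> f (Poly_Mapping.single m c) = \<phi> c * monom_value f m"
  by (simp add: eval_hom_def)

lemma eval_hom_mult: "eval_hom \<phi> f (p * q) = eval_hom \<phi> f p * eval_hom \<phi> f q"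
proof -
  have "p * q = (\<Sum>m\<in>Poly_Mapping.keys p. \<Sum>m'\<in>Poly_Mapping.keys q.
       Poly_Mapping.single (m + m') (Poly_Mapping.lookup p m * Poly_Mapping.lookup q m'))"
    by (subst poly_mapping_sum_single, subst (2) poly_mapping_sum_single)
      (simp add: sum_product mult_single)
  then have "eval_hom \<phi> f (p * q) = (\<Sum>m\<in>Poly_Mapping.keys p. \<Sum>m'\<in>Poly_Mapping.keys q.
       \<phi> (Poly_Mapping.lookup p m) * monom_value f m * (\<phi> (Poly_Mapping.lookup q m') * monom_value f m'))"
    by (simp add: eval_hom_sum eval_hom_single hom_mult monom_value_add mult_ac)
  also have "\<dots> = eval_hom \<phi> f p * eval_hom \<phi> f q"
    by (simp add: eval_hom_def sum_product)
  finally show ?thesis .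
qed

lemma ring_hom_eval_hom: "ring_hom (eval_hom \<phi> f)"
  by unfold_locales (simp_all add: eval_hom_add eval_hom_mult eval_hom_single[of f 0 1, simplified]
      hom_one monom_value_def)

lemma eval_hom_mConst [simp]: "eval_hom \<phi> f (mConst c) = \<phi> c"
  by (simp add: mConst_def eval_hom_single monom_value_def)

lemma eval_hom_mVar [simp]: "eval_hom \<phi> f (mVar i) = f i"
  by (simp add: mVar_def eval_hom_single hom_one monom_value_def)

end

lemma ring_hom_id: "ring_hom id"
  by unfold_locales auto

lemma ring_hom_mConst: "ring_hom mConst"
  by unfold_locales (auto simp: mConst_def single_add mult_single)

lemma mpoly_eval_eq_eval_hom: "mpoly_eval f = eval_hom id f"
  by (rule ext) (simp add: mpoly_eval_def eval_hom_def monom_value_def)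

lemma mpoly_subst_eq_eval_hom: "mpoly_subst g = eval_hom mConst g"
  by (rule ext) (simp add: mpoly_subst_def eval_hom_def monom_value_def)

lemma ring_hom_mpoly_eval: "ring_hom (mpoly_eval f)"
  unfolding mpoly_eval_eq_eval_hom by (rule ring_hom.ring_hom_eval_hom[OF ring_hom_id])

lemma ring_hom_mpoly_subst: "ring_hom (mpoly_subst g)"
  unfolding mpoly_subst_eq_eval_hom by (rule ring_hom.ring_hom_eval_hom[OF ring_hom_mConst])

lemma mpoly_subst_mConst [simp]: "mpoly_subst g (mConst c) = mConst c"
  unfolding mpoly_subst_eq_eval_hom by (rule ring_hom.eval_hom_mConst[OF ring_hom_mConst])

lemma mpoly_subst_zero [simp]: "mpoly_subst g 0 = 0"
  by (simp add: mpoly_subst_def)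

lemma ring_hom_mpoly_subst_commute:
  assumes "ring_hom \<psi>" "\<And>c. \<psi> (mConst c) = mConst c"
  shows "\<psi> (mpoly_subst g F) = mpoly_subst (\<lambda>t. \<psi> (g t)) F"
  unfolding mpoly_subst_def using assms by (simp add: ring_hom.hom_simps)

lemma mpoly_eval_mVar [simp]: "mpoly_eval f (mVar i) = f i"
  unfolding mpoly_eval_eq_eval_hom by (rule ring_hom.eval_hom_mVar[OF ring_hom_id])

lemma mpoly_eval_mConst [simp]: "mpoly_eval f (mConst c) = c"
  unfolding mpoly_eval_eq_eval_hom using ring_hom.eval_hom_mConst[OF ring_hom_id] by simp

lemma mpoly_subst_mVar [simp]: "mpoly_subst g (mVar i) = g i"
  unfolding mpoly_subst_eq_eval_hom by (rule ring_hom.eval_hom_mVar[OF ring_hom_mConst])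

lemma lookup_mono_of_set:
  "finite S \<Longrightarrow> Poly_Mapping.lookup (mono_of_set S) i = (if i \<in> S then 1 else 0)"
  by (simp add: mono_of_set_def lookup_sum lookup_single when_def)

lemma mono_of_set_inject:
  assumes "finite S" "finite R"
  shows "mono_of_set S = mono_of_set R \<longleftrightarrow> S = R"
proof
  assume "mono_of_set S = mono_of_set R"
  then have "(if i \<in> S then 1 else 0::nat) = (if i \<in> R then 1 else 0)" for i
    by (metis assms lookup_mono_of_set)
  then show "S = R" by (metis one_neq_zero subsetI subset_antisym)
qed simp

lemma prod_mVar_eq_single:
  "finite S \<Longrightarrow> (\<Prod>i\<in>S. mVar i) = (Poly_Mapping.single (mono_of_set S) 1 :: 'a::comm_ring_1 mpoly)"
  by (induct S rule: finite_induct) (simp_all add: mono_of_set_def mVar_def mult_single)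

lemma mVar_power: "(mVar i :: 'a::comm_ring_1 mpoly) ^ e = Poly_Mapping.single (Poly_Mapping.single i e) 1"
  by (induct e) (simp_all add: mVar_def mult_single single_add[symmetric])

lemma prod_mVar_power_eq_single:
  "finite B \<Longrightarrow> (\<Prod>j\<in>B. (mVar j :: 'a::comm_ring_1 mpoly) ^ e j) =
     Poly_Mapping.single (\<Sum>j\<in>B. Poly_Mapping.single j (e j)) 1"
  by (induct B rule: finite_induct) (simp_all add: mVar_power mult_single)

lemma single_sum: "Poly_Mapping.single m (sum f A) = (\<Sum>x\<in>A. Poly_Mapping.single m (f x))"
  by (induct A rule: infinite_finite_induct) (simp_all add: single_add)

lemma mConst_mult_single: "mConst c * Poly_Mapping.single m d = Poly_Mapping.single m (c * d)"
  by (simp add: mConst_def mult_single)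

lemma lookup_mConst_mult: "Poly_Mapping.lookup (mConst c * p) m = c * Poly_Mapping.lookup p m"
proof -
  have "mConst c * p = (\<Sum>m'\<in>Poly_Mapping.keys p. Poly_Mapping.single m' (c * Poly_Mapping.lookup p m'))"
    by (subst poly_mapping_sum_single) (simp add: sum_distrib_left mConst_mult_single)
  then show ?thesis
    by (simp add: lookup_sum lookup_single when_def sum_distrib_left[symmetric] in_keys_iff
        cong: if_cong)
qed

lemma prod_affine_eq_sum_Pow:
  "(\<Prod>i<n. mConst (a i) * mVar i + mConst (b i)) =
   (\<Sum>R\<in>Pow {..<n}. Poly_Mapping.single (mono_of_set R)
        ((\<Prod>i\<in>R. a i) * (\<Prod>i\<in>{..<n} - R. b i)) :: 'a::comm_ring_1 mpoly)"
proof -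
  have "(\<Prod>i<n. mConst (a i) * mVar i + mConst (b i)) =
    (\<Sum>R\<in>Pow {..<n}. (\<Prod>i\<in>R. mConst (a i) * mVar i) * (\<Prod>i\<in>{..<n} - R. mConst (b i)))"
    by (rule prod_add) simp
  also have "\<dots> = (\<Sum>R\<in>Pow {..<n}. Poly_Mapping.single (mono_of_set R)
        ((\<Prod>i\<in>R. a i) * (\<Prod>i\<in>{..<n} - R. b i)))"
  proof (rule sum.cong)
    fix R assume "R \<in> Pow {..<n}"
    then have "finite R" by (auto intro: finite_subset)
    then show "(\<Prod>i\<in>R. mConst (a i) * mVar i) * (\<Prod>i\<in>{..<n} - R. mConst (b i)) =
        Poly_Mapping.single (mono_of_set R) ((\<Prod>i\<in>R. a i) * (\<Prod>i\<in>{..<n} - R. b i))"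
      by (simp add: prod.distrib ring_hom.hom_prod[OF ring_hom_mConst, symmetric]
          prod_mVar_eq_single mConst_mult_single mult.commute[of _ "mConst _"] mult.commute[of "prod b _"])
  qed simp
  finally show ?thesis .
qed

lemma lookup_sum_Pow_single:
  assumes "S \<subseteq> {..<n}"
  shows "Poly_Mapping.lookup (\<Sum>R\<in>Pow {..<n}. Poly_Mapping.single (mono_of_set R) (c R)) (mono_of_set S) = c S"
proof -
  have "Poly_Mapping.lookup (\<Sum>R\<in>Pow {..<n}. Poly_Mapping.single (mono_of_set R) (c R)) (mono_of_set S)
     = (\<Sum>R\<in>Pow {..<n}. (c R when R = S))"
    using assms by (intro trans[OF lookup_sum] sum.cong)
      (auto simp: lookup_single when_def mono_of_set_inject finite_subset)
  also have "\<dots> = c S" using assms by (simp add: when_def)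
  finally show ?thesis .
qed

lemma mpoly_vars_add: "mpoly_vars p \<subseteq> V \<Longrightarrow> mpoly_vars q \<subseteq> V \<Longrightarrow> mpoly_vars (p + q) \<subseteq> V"
  unfolding mpoly_vars_def using keys_add[of p q] by blast

lemma mpoly_vars_mult:
  assumes "mpoly_vars p \<subseteq> V" "mpoly_vars q \<subseteq> V"
  shows "mpoly_vars (p * q) \<subseteq> V"
proof
  fix x assume "x \<in> mpoly_vars (p * q)"
  then obtain m where m: "m \<in> Poly_Mapping.keys (p * q)" "x \<in> Poly_Mapping.keys m"
    unfolding mpoly_vars_def by blast
  then obtain a b where "m = a + b" "a \<in> Poly_Mapping.keys p" "b \<in> Poly_Mapping.keys q"
    using keys_mult[of p q] by blast
  then show "x \<in> V"
    using m(2) keys_add[of a b] assms unfolding mpoly_vars_def by blast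
qed

lemma mpoly_vars_diff:
  "mpoly_vars p \<subseteq> V \<Longrightarrow> mpoly_vars q \<subseteq> V \<Longrightarrow> mpoly_vars (p - q :: 'a::comm_ring_1 mpoly) \<subseteq> V"
  using mpoly_vars_add[of p V "- q"] by (simp add: mpoly_vars_def)

lemma mpoly_vars_one: "mpoly_vars (1 :: 'a::comm_ring_1 mpoly) \<subseteq> V"
  by (simp add: mpoly_vars_def)

lemma mpoly_vars_mVar: "i \<in> V \<Longrightarrow> mpoly_vars (mVar i :: 'a::comm_ring_1 mpoly) \<subseteq> V"
  by (simp add: mpoly_vars_def mVar_def)

lemma mpoly_vars_sum: "(\<And>x. x \<in> A \<Longrightarrow> mpoly_vars (g x) \<subseteq> V) \<Longrightarrow> mpoly_vars (sum g A) \<subseteq> V"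
proof (induct A rule: infinite_finite_induct)
  case (insert x F)
  have "mpoly_vars (g x) \<subseteq> V" "mpoly_vars (sum g F) \<subseteq> V"
    using insert.prems insert.hyps(3) by simp_all
  then have "mpoly_vars (g x + sum g F) \<subseteq> V" by (rule mpoly_vars_add)
  with insert.hyps(1,2) show ?case by simp
qed (simp_all add: mpoly_vars_def)

lemma mpoly_vars_prod:
  "(\<And>x. x \<in> A \<Longrightarrow> mpoly_vars (g x) \<subseteq> V) \<Longrightarrow> mpoly_vars (prod g A :: 'a::comm_ring_1 mpoly) \<subseteq> V"
proof (induct A rule: infinite_finite_induct)
  case (insert x F)
  have "mpoly_vars (g x) \<subseteq> V" "mpoly_vars (prod g F) \<subseteq> V"
    using insert.prems insert.hyps(3) by simp_all
  then have "mpoly_vars (g x * prod g F) \<subseteq> V" by (rule mpoly_vars_mult)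
  with insert.hyps(1,2) show ?case by simp
qed (simp_all add: mpoly_vars_one)

subsection \<open>Coordinates of the generator\<close>

lemma G_SSSV_eq:
  assumes "S \<subseteq> {..<n}"
  shows "(G_SSSV n k S :: 'a::comm_ring_1 mpoly) =
    (\<Sum>j<k. mVar j * ((\<Prod>i\<in>S. mVar (zvar n k j i)) * (\<Prod>i\<in>{..<n} - S. 1 - mVar (zvar n k j i)))) + 1"
proof -
  have P: "P_poly n k j = (\<Sum>R\<in>Pow {..<n}. Poly_Mapping.single (mono_of_set R)
        ((\<Prod>i\<in>R. mVar (zvar n k j i)) * (\<Prod>i\<in>{..<n} - R. 1 - mVar (zvar n k j i))))" for j
    unfolding P_poly_def by (rule prod_affine_eq_sum_Pow)
  have ones: "(\<Prod>i<n. mVar i + 1) =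
      (\<Sum>R\<in>Pow {..<n}. Poly_Mapping.single (mono_of_set R) 1 :: 'a mpoly mpoly)"
    using prod_affine_eq_sum_Pow[where a="\<lambda>_. 1::'a mpoly" and n=n and b="\<lambda>_. 1"]
    by (simp add: mConst_def)
  show ?thesis
    unfolding G_SSSV_def Q_SSSV_def Q_SSV_def
    by (simp add: lookup_add lookup_sum lookup_mConst_mult P ones
        lookup_sum_Pow_single[OF assms, unfolded lookup_sum] del: prod_constant)
qed

lemma ring_hom_G_SSSV:
  assumes "ring_hom \<psi>" "S \<subseteq> {..<n}"
  shows "\<psi> (G_SSSV n k S) = (\<Sum>j<k. \<psi> (mVar j) *
      ((\<Prod>i\<in>S. \<psi> (mVar (zvar n k j i))) * (\<Prod>i\<in>{..<n} - S. 1 - \<psi> (mVar (zvar n k j i))))) + 1"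
  unfolding G_SSSV_eq[OF assms(2)] using assms(1) by (simp add: ring_hom.hom_simps)

lemma zvar_less: "j < k \<Longrightarrow> i < n \<Longrightarrow> zvar n k j i < k + k * n"
proof -
  assume "j < k" "i < n"
  then have "j * n + i < (j + 1) * n" by simp
  also have "\<dots> \<le> k * n" using \<open>j < k\<close> by (intro mult_right_mono) auto
  finally show ?thesis unfolding zvar_def by simp
qed

lemma mpoly_vars_G_SSSV:
  assumes "S \<subseteq> {0..<n}"
  shows "mpoly_vars (G_SSSV n k S :: 'a::comm_ring_1 mpoly) \<subseteq> {0..<k + k * n}"
proof -
  have "S \<subseteq> {..<n}" using assms by auto
  then show ?thesis
    unfolding G_SSSV_eq[OF \<open>S \<subseteq> {..<n}\<close>]
    by (intro mpoly_vars_add mpoly_vars_sum mpoly_vars_mult mpoly_vars_prod mpoly_vars_diff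
        mpoly_vars_one mpoly_vars_mVar) (auto intro: zvar_less)
qed

subsection \<open>The \<open>\<Sigma>\<Pi>\<Sigma>\<close> formula\<close>

text \<open>The product gate \<open>c \<cdot> \<Prod>\<^sub>i<\<^sub>n (a\<^sub>i x\<^sub>i + b\<^sub>i)\<close>; the factor \<open>c\<close> is a constant affine form.\<close>
definition affine_gate :: "'a::comm_ring_1 \<Rightarrow> (nat \<Rightarrow> 'a) \<Rightarrow> (nat \<Rightarrow> 'a) \<Rightarrow> nat \<Rightarrow> 'a affine list" where
  "affine_gate c a b n = (c, 0) # map (\<lambda>i. (b i, Poly_Mapping.single i (a i))) [0..<n]"

definition sssv_formula :: "(nat \<Rightarrow> 'a::comm_ring_1) \<Rightarrow> nat \<Rightarrow> nat \<Rightarrow> 'a spsformula" where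
  "sssv_formula \<alpha> n k =
     map (\<lambda>j. affine_gate (\<alpha> j) (\<lambda>i. \<alpha> (zvar n k j i)) (\<lambda>i. 1 - \<alpha> (zvar n k j i)) n) [0..<k]
     @ [affine_gate 1 (\<lambda>_. 1) (\<lambda>_. 1) n]"

lemma prod_list_map_upt: "prod_list (map g [0..<n]) = (\<Prod>i<n. g i)"
  by (simp add: prod.distinct_set_conv_list[symmetric] atLeast0LessThan)

lemma sum_list_map_upt: "sum_list (map g [0..<n]) = (\<Sum>i<n. g i)"
  by (simp add: sum.distinct_set_conv_list[symmetric] atLeast0LessThan)

lemma affine_poly_const: "affine_poly (c, 0) = (mConst c :: 'a::comm_ring_1 mpoly)"
  by (simp add: affine_poly_def)

lemma affine_poly_single:
  "affine_poly (b, Poly_Mapping.single i a) = mConst a * (mVar i :: 'a::comm_ring_1 mpoly) + mConst b"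
  unfolding affine_poly_def by (cases "a = 0") (simp_all add: mConst_def)

lemma prod_list_affine_gate:
  "prod_list (map affine_poly (affine_gate c a b n)) =
   (\<Sum>R\<in>Pow {..<n}. Poly_Mapping.single (mono_of_set R)
        (c * ((\<Prod>i\<in>R. a i) * (\<Prod>i\<in>{..<n} - R. b i))) :: 'a::comm_ring_1 mpoly)"
proof -
  have "prod_list (map affine_poly (affine_gate c a b n)) =
      mConst c * (\<Prod>i<n. mConst (a i) * mVar i + mConst (b i))"
    by (simp add: affine_gate_def affine_poly_const affine_poly_single prod_list_map_upt)
  then show ?thesis
    by (simp add: prod_affine_eq_sum_Pow sum_distrib_left mConst_mult_single)
qed

lemma keys_affine_gate:
  "i < length (affine_gate c a b n) \<Longrightarrow>
     Poly_Mapping.keys (snd (affine_gate c a b n ! i)) \<subseteq> (if i = 0 then {} else {i - 1})"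
  by (cases i) (auto simp: affine_gate_def)

lemma sps_multilinear_sssv_formula: "sps_multilinear (sssv_formula \<alpha> n k)"
  unfolding sps_multilinear_def
proof (intro ballI allI impI)
  fix t i j assume "t \<in> set (sssv_formula \<alpha> n k)" and ij: "i < length t" "j < length t" "i \<noteq> j"
  then obtain c a b where t: "t = affine_gate c a b n"
    unfolding sssv_formula_def by auto
  show "Poly_Mapping.keys (snd (t ! i)) \<inter> Poly_Mapping.keys (snd (t ! j)) = {}"
    using keys_affine_gate[of i c a b n] keys_affine_gate[of j c a b n] ij
    unfolding t by (cases "i = 0"; cases "j = 0") auto
qed

lemma sps_size_sssv_formula: "sps_size (sssv_formula \<alpha> n k) \<le> (k + 1) * (2 * n + 2)"
proof -
  have gate: "1 + (\<Sum>f\<leftarrow>affine_gate c a b n. 1 + card (Poly_Mapping.keys (snd f))) \<le> 2 * n + 2"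
    for c and a b :: "nat \<Rightarrow> 'a"
  proof -
    have "(\<Sum>i<n. 1 + card (Poly_Mapping.keys (Poly_Mapping.single i (a i)))) \<le> (\<Sum>i<n. 2)"
      by (intro sum_mono) simp
    then show ?thesis by (simp add: affine_gate_def sum_list_map_upt comp_def)
  qed
  have "sps_size (sssv_formula \<alpha> n k) \<le> (\<Sum>g\<leftarrow>sssv_formula \<alpha> n k. 2 * n + 2)"
    unfolding sps_size_def
  proof (rule sum_list_mono)
    fix g assume "g \<in> set (sssv_formula \<alpha> n k)"
    then obtain c a b where "g = affine_gate c a b n"
      unfolding sssv_formula_def by auto
    then show "1 + (\<Sum>f\<leftarrow>g. 1 + card (Poly_Mapping.keys (snd f))) \<le> 2 * n + 2"
      using gate by blast
  qed
  also have "\<dots> = length (sssv_formula \<alpha> n k) * (2 * n + 2)"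
    by (simp only: sum_list_triv of_nat_id)
  also have "\<dots> = (k + 1) * (2 * n + 2)"
    by (simp add: sssv_formula_def)
  finally show ?thesis .
qed

lemma sps_poly_sssv_formula:
  "sps_poly (sssv_formula \<alpha> n k) =
    (\<Sum>S\<in>Pow {0..<n}. mConst (mpoly_eval \<alpha> (G_SSSV n k S)) * (\<Prod>i\<in>S. mVar i) :: 'a::comm_ring_1 mpoly)"
proof -
  let ?X = "\<lambda>j R. (\<Prod>i\<in>R. \<alpha> (zvar n k j i)) * (\<Prod>i\<in>{..<n} - R. 1 - \<alpha> (zvar n k j i))"
  have "sps_poly (sssv_formula \<alpha> n k) =
      (\<Sum>j<k. prod_list (map affine_poly
         (affine_gate (\<alpha> j) (\<lambda>i. \<alpha> (zvar n k j i)) (\<lambda>i. 1 - \<alpha> (zvar n k j i)) n)))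
      + prod_list (map affine_poly (affine_gate 1 (\<lambda>_. 1) (\<lambda>_. 1) n))"
    by (simp add: sps_poly_def sssv_formula_def sum_list_map_upt comp_def)
  also have "\<dots> = (\<Sum>j<k. \<Sum>R\<in>Pow {..<n}. Poly_Mapping.single (mono_of_set R) (\<alpha> j * ?X j R))
      + (\<Sum>R\<in>Pow {..<n}. Poly_Mapping.single (mono_of_set R) 1)"
    unfolding prod_list_affine_gate by simp
  also have "\<dots> = (\<Sum>R\<in>Pow {..<n}. Poly_Mapping.single (mono_of_set R) ((\<Sum>j<k. \<alpha> j * ?X j R) + 1))"
    by (simp add: single_add single_sum sum.distrib sum.swap[of _ "{..<k}"])
  also have "\<dots> = (\<Sum>S\<in>Pow {0..<n}. mConst (mpoly_eval \<alpha> (G_SSSV n k S)) * (\<Prod>i\<in>S. mVar i))"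
  proof (rule sum.cong)
    fix R assume "R \<in> Pow {0..<n}"
    then have R: "finite R" "R \<subseteq> {..<n}" by (auto intro: finite_subset)
    show "Poly_Mapping.single (mono_of_set R) ((\<Sum>j<k. \<alpha> j * ?X j R) + 1) =
      mConst (mpoly_eval \<alpha> (G_SSSV n k R)) * (\<Prod>i\<in>R. mVar i)"
      by (simp add: ring_hom_G_SSSV[OF ring_hom_mpoly_eval R(2)] prod_mVar_eq_single[OF R(1)]
          mConst_mult_single)
  qed (simp add: lessThan_atLeast0)
  finally show ?thesis .
qed

subsection \<open>Isolating a monomial class\<close>

lemma exists_halving_variable:
  assumes "finite A" "m1 \<in> A" "m2 \<in> A" "m1 \<noteq> m2"
  shows "\<exists>v w. v \<in> Poly_Mapping.keys m1 \<union> Poly_Mapping.keys m2 \<and> w \<in> A \<and>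
    2 * card {m\<in>A. Poly_Mapping.lookup m v = Poly_Mapping.lookup w v} \<le> card A"
proof -
  obtain v where v: "Poly_Mapping.lookup m1 v \<noteq> Poly_Mapping.lookup m2 v"
    using assms(4) poly_mapping_eqI[of m1 m2] by blast
  define C where "C w = {m\<in>A. Poly_Mapping.lookup m v = Poly_Mapping.lookup w v}" for w
  have "card (C m1) + card (C m2) = card (C m1 \<union> C m2)"
    using v assms(1) by (intro card_Un_disjoint[symmetric]) (auto simp: C_def)
  also have "\<dots> \<le> card A"
    using assms(1) by (intro card_mono) (auto simp: C_def)
  finally have "2 * card (C m1) \<le> card A \<or> 2 * card (C m2) \<le> card A" by linarith
  moreover have "v \<in> Poly_Mapping.keys m1 \<union> Poly_Mapping.keys m2"
    using v by (auto simp: in_keys_iff)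
  ultimately show ?thesis
    using assms(2,3) unfolding C_def by blast
qed

text \<open>Recurse into the smaller class along a distinguishing variable; the recursion ends at a
  singleton class, whose sum is a single nonzero coefficient.\<close>
lemma exists_isolating_variables:
  fixes c :: "(nat \<Rightarrow>\<^sub>0 nat) \<Rightarrow> 'a::comm_ring_1"
  assumes "finite A" "A \<noteq> {}" "\<And>m. m \<in> A \<Longrightarrow> c m \<noteq> 0"
  shows "\<exists>T m0. m0 \<in> A \<and> finite T \<and> T \<subseteq> (\<Union>m\<in>A. Poly_Mapping.keys m) \<and> 2 ^ card T \<le> card A \<and>
     (\<Sum>m\<in>{m\<in>A. \<forall>t\<in>T. Poly_Mapping.lookup m t = Poly_Mapping.lookup m0 t}. c m) \<noteq> 0"
  using assms
proof (induct "card A" arbitrary: A rule: less_induct)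
  case less
  show ?case
  proof (cases "card A = 1")
    case True
    then obtain m0 where "A = {m0}" using card_1_singletonE by blast
    then show ?thesis
      using less.prems by (intro exI[of _ "{}"] exI[of _ m0]) simp
  next
    case False
    moreover have "card A \<noteq> 0" using less.prems by simp
    ultimately have "\<not> card A \<le> Suc 0" by linarith
    then obtain m1 m2 where "m1 \<in> A" "m2 \<in> A" "m1 \<noteq> m2"
      using card_le_Suc0_iff_eq[OF less.prems(1)] by blast
    then obtain v w where vw: "v \<in> Poly_Mapping.keys m1 \<union> Poly_Mapping.keys m2" "w \<in> A"
      "2 * card {m\<in>A. Poly_Mapping.lookup m v = Poly_Mapping.lookup w v} \<le> card A"
      using exists_halving_variable[OF less.prems(1)] by blast
    define C where "C = {m\<in>A. Poly_Mapping.lookup m v = Poly_Mapping.lookup w v}"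
    have C: "C \<subseteq> A" "w \<in> C" "finite C" "2 * card C \<le> card A"
      using vw(2,3) less.prems(1) by (auto simp: C_def)
    then have "0 < card C" by (auto simp: card_gt_0_iff)
    then have "card C < card A" using C(4) by linarith
    moreover have "C \<noteq> {}" "\<And>m. m \<in> C \<Longrightarrow> c m \<noteq> 0"
      using C(1,2) less.prems(3) by auto
    ultimately obtain T m0 where IH: "m0 \<in> C" "finite T"
        "T \<subseteq> (\<Union>m\<in>C. Poly_Mapping.keys m)" "2 ^ card T \<le> card C"
        "(\<Sum>m\<in>{m\<in>C. \<forall>t\<in>T. Poly_Mapping.lookup m t = Poly_Mapping.lookup m0 t}. c m) \<noteq> 0"
      using less.hyps[OF _ C(3)] by meson
    have "{m\<in>A. \<forall>t\<in>insert v T. Poly_Mapping.lookup m t = Poly_Mapping.lookup m0 t} =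
        {m\<in>C. \<forall>t\<in>T. Poly_Mapping.lookup m t = Poly_Mapping.lookup m0 t}"
      using IH(1) by (auto simp: C_def)
    moreover have "2 ^ card (insert v T) \<le> card A"
    proof -
      have "(2::nat) ^ card (insert v T) \<le> 2 * 2 ^ card T"
        using IH(2) by (simp add: card_insert_if)
      then show ?thesis using IH(4) C(4) by linarith
    qed
    moreover have "insert v T \<subseteq> (\<Union>m\<in>A. Poly_Mapping.keys m)"
      using IH(3) C(1) vw(1) \<open>m1 \<in> A\<close> \<open>m2 \<in> A\<close> by blast
    moreover have "m0 \<in> A" "finite (insert v T)" using IH(1,2) C(1) by auto
    ultimately show ?thesis
      using IH(5) by (intro exI[of _ "insert v T"] exI[of _ m0] conjI) simp_all
  qed
qed

lemma lookup_sum_single_lessThan: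
  "Poly_Mapping.lookup (\<Sum>j<r. Poly_Mapping.single j (e j)) (i::nat) = (if i < r then e i else 0)"
  by (simp add: lookup_sum lookup_single when_def)

text \<open>If \<open>g\<close> sends \<open>\<tau> j\<close> to the variable \<open>j\<close> and every other variable of \<open>F\<close> to \<open>1\<close>, then each
  monomial \<open>m\<close> of \<open>F\<close> becomes its projection \<open>\<Prod>\<^sub>j Y\<^sub>j\<^bsup>m (\<tau> j)\<^esup>\<close>, and monomials collide exactly
  when they agree on \<open>\<tau> ` {..<r}\<close>.\<close>
lemma lookup_mpoly_subst_projection:
  fixes F :: "'a::comm_ring_1 mpoly"
  assumes inj: "inj_on \<tau> {..<r}"
    and g_\<tau>: "\<And>j. j < r \<Longrightarrow> g (\<tau> j) = mVar j"
    and g_other: "\<And>t. t \<in> mpoly_vars F \<Longrightarrow> t \<notin> \<tau> ` {..<r} \<Longrightarrow> g t = 1"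
  shows "Poly_Mapping.lookup (mpoly_subst g F) (\<Sum>j<r. Poly_Mapping.single j (Poly_Mapping.lookup m0 (\<tau> j))) =
    (\<Sum>m\<in>{m\<in>Poly_Mapping.keys F. \<forall>j<r. Poly_Mapping.lookup m (\<tau> j) = Poly_Mapping.lookup m0 (\<tau> j)}.
       Poly_Mapping.lookup F m)"
proof -
  define \<pi> where "\<pi> m = (\<Sum>j<r. Poly_Mapping.single j (Poly_Mapping.lookup m (\<tau> j)))" for m :: "nat \<Rightarrow>\<^sub>0 nat"
  have monomial: "(\<Prod>t\<in>Poly_Mapping.keys m. g t ^ Poly_Mapping.lookup m t) = Poly_Mapping.single (\<pi> m) 1"
    if m: "m \<in> Poly_Mapping.keys F" for m
  proof -
    have "(\<Prod>t\<in>Poly_Mapping.keys m. g t ^ Poly_Mapping.lookup m t) =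
        (\<Prod>t\<in>Poly_Mapping.keys m \<union> \<tau> ` {..<r}. g t ^ Poly_Mapping.lookup m t)"
      by (rule prod.mono_neutral_left) (auto simp: in_keys_iff)
    also have "\<dots> = (\<Prod>t\<in>\<tau> ` {..<r}. g t ^ Poly_Mapping.lookup m t)"
    proof (rule prod.mono_neutral_right)
      have "g t = 1" if "t \<in> Poly_Mapping.keys m" "t \<notin> \<tau> ` {..<r}" for t
        using g_other[of t] m that unfolding mpoly_vars_def by blast
      then show "\<forall>t\<in>Poly_Mapping.keys m \<union> \<tau> ` {..<r} - \<tau> ` {..<r}. g t ^ Poly_Mapping.lookup m t = 1"
        by auto
    qed auto
    also have "\<dots> = (\<Prod>j<r. mVar j ^ Poly_Mapping.lookup m (\<tau> j))"
      by (simp add: prod.reindex[OF inj] g_\<tau>)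
    also have "\<dots> = Poly_Mapping.single (\<pi> m) 1"
      unfolding \<pi>_def by (rule prod_mVar_power_eq_single) simp
    finally show ?thesis .
  qed
  have "mpoly_subst g F = (\<Sum>m\<in>Poly_Mapping.keys F. Poly_Mapping.single (\<pi> m) (Poly_Mapping.lookup F m))"
    unfolding mpoly_subst_def by (intro sum.cong) (simp_all add: monomial mConst_mult_single)
  moreover have "\<pi> m = \<pi> m0 \<longleftrightarrow> (\<forall>j<r. Poly_Mapping.lookup m (\<tau> j) = Poly_Mapping.lookup m0 (\<tau> j))" for m
    by (auto simp: poly_mapping_eq_iff fun_eq_iff \<pi>_def lookup_sum_single_lessThan)
  ultimately show ?thesis
    by (simp add: \<pi>_def[symmetric] lookup_sum lookup_single when_def sum.inter_filter)
qed

lemma set_of_index_subset: "set_of_index n t \<subseteq> {..<n}"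
  by (auto simp: set_of_index_def)

lemma set_of_index_inject:
  assumes "t < 2 ^ n" "t' < 2 ^ n"
  shows "set_of_index n t = set_of_index n t' \<longleftrightarrow> t = t'"
proof
  assume "set_of_index n t = set_of_index n t'"
  then have "take_bit n t = take_bit n t'"
    unfolding set_of_index_def by (auto simp: bit_eq_iff bit_take_bit_iff set_eq_iff)
  then show "t = t'" using assms by (simp add: take_bit_nat_eq_self)
qed simp

lemma prod_indicator_complement:
  assumes "S \<subseteq> U" "B \<subseteq> U" "finite U"
  shows "(\<Prod>i\<in>S. if i \<in> B then 1 else 0) * (\<Prod>i\<in>U - S. 1 - (if i \<in> B then 1 else 0)) =
    (if S = B then 1 else (0::'a::comm_ring_1))"
proof (cases "S = B")
  case False
  then obtain i where "i \<in> S - B \<or> i \<in> B - S" by blast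
  then have "(\<Prod>i\<in>S. if i \<in> B then 1 else 0::'a) = 0 \<or> (\<Prod>i\<in>U - S. 1 - (if i \<in> B then 1 else 0::'a)) = 0"
    using assms finite_subset[OF assms(1,3)] by (auto intro!: prod_zero)
  then show ?thesis using False by auto
qed simp

definition sssv_specialization :: "nat \<Rightarrow> nat \<Rightarrow> nat \<Rightarrow> (nat \<Rightarrow> nat) \<Rightarrow> nat \<Rightarrow> 'a::comm_ring_1 mpoly" where
  "sssv_specialization n k r \<tau> v =
     (if v < k then (if v < r then mVar v - 1 else 0)
      else if (v - k) div n < r \<and> bit (\<tau> ((v - k) div n)) ((v - k) mod n) then 1 else 0)"

lemma sssv_specialization_zvar:
  "i < n \<Longrightarrow> sssv_specialization n k r \<tau> (zvar n k j i) = (if j < r \<and> i \<in> set_of_index n (\<tau> j) then 1 else 0)"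
  by (simp add: sssv_specialization_def zvar_def set_of_index_def)

lemma mpoly_subst_sssv_specialization_G_SSSV:
  assumes "r \<le> k" "\<And>j. j < r \<Longrightarrow> \<tau> j < 2 ^ n" "t < 2 ^ n"
  shows "mpoly_subst (sssv_specialization n k r \<tau>) (G_SSSV n k (set_of_index n t)) =
    (\<Sum>j\<in>{j. j < r \<and> \<tau> j = t}. mVar j - 1) + 1"
proof -
  let ?h = "sssv_specialization n k r \<tau> :: nat \<Rightarrow> 'a mpoly" and ?S = "set_of_index n t"
  have summand: "?h j * ((\<Prod>i\<in>?S. ?h (zvar n k j i)) * (\<Prod>i\<in>{..<n} - ?S. 1 - ?h (zvar n k j i))) =
      (if j < r \<and> \<tau> j = t then mVar j - 1 else 0)" if "j < k" for j
  proof (cases "j < r")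
    case True
    have "(\<Prod>i\<in>?S. ?h (zvar n k j i)) * (\<Prod>i\<in>{..<n} - ?S. 1 - ?h (zvar n k j i)) =
        (\<Prod>i\<in>?S. if i \<in> set_of_index n (\<tau> j) then 1 else 0) *
        (\<Prod>i\<in>{..<n} - ?S. 1 - (if i \<in> set_of_index n (\<tau> j) then 1 else 0))"
      using set_of_index_subset True
      by (intro arg_cong2[where f = "(*)"] prod.cong) (auto simp: sssv_specialization_zvar set_of_index_def)
    also have "\<dots> = (if ?S = set_of_index n (\<tau> j) then 1 else 0)"
      by (rule prod_indicator_complement[OF set_of_index_subset set_of_index_subset finite_lessThan])
    also have "\<dots> = (if t = \<tau> j then 1 else 0)"
      using set_of_index_inject[OF assms(3) assms(2)[OF True]] by simp
    finally show ?thesis using True that by (simp add: sssv_specialization_def)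
  qed (use that in \<open>simp add: sssv_specialization_def\<close>)
  have "mpoly_subst ?h (G_SSSV n k ?S) = (\<Sum>j<k. if j < r \<and> \<tau> j = t then mVar j - 1 else 0) + 1"
    by (simp add: ring_hom_G_SSSV[OF ring_hom_mpoly_subst set_of_index_subset] summand)
  also have "(\<Sum>j<k. if j < r \<and> \<tau> j = t then mVar j - 1 else 0) = (\<Sum>j\<in>{j. j < r \<and> \<tau> j = t}. mVar j - (1::'a mpoly))"
    using assms(1) by (simp add: sum.inter_filter[symmetric]) (intro arg_cong2[where f = sum] refl; auto)
  finally show ?thesis .
qed

subsection \<open>The hitting property\<close>

lemma gen_compose_G_SSSV_nonzero:
  fixes F :: "'a::comm_ring_1 mpoly"
  assumes vars: "mpoly_vars F \<subseteq> {0..<2 ^ n}" and sparse: "card (Poly_Mapping.keys F) \<le> 2 ^ k"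
    and "F \<noteq> 0"
  shows "gen_compose n (G_SSSV n k) F \<noteq> 0"
proof -
  obtain T m0 where T: "finite T" "T \<subseteq> (\<Union>m\<in>Poly_Mapping.keys F. Poly_Mapping.keys m)"
      "2 ^ card T \<le> card (Poly_Mapping.keys F)"
    and isolated: "(\<Sum>m\<in>{m\<in>Poly_Mapping.keys F. \<forall>t\<in>T. Poly_Mapping.lookup m t = Poly_Mapping.lookup m0 t}.
        Poly_Mapping.lookup F m) \<noteq> 0"
    using exists_isolating_variables[of "Poly_Mapping.keys F" "Poly_Mapping.lookup F"] \<open>F \<noteq> 0\<close>
    by (auto simp: in_keys_iff)
  define r where "r = card T"
  have "r \<le> k"
    using T(3) sparse unfolding r_def by (meson order.trans power_le_imp_le_exp one_less_numeral_iff semiring_norm(76))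
  obtain \<tau> where "bij_betw \<tau> {..<r} T"
    using ex_bij_betw_nat_finite[OF T(1)] by (auto simp: r_def lessThan_atLeast0)
  then have inj: "inj_on \<tau> {..<r}" and T_eq: "T = \<tau> ` {..<r}" by (auto simp: bij_betw_def)
  have T_vars: "T \<subseteq> mpoly_vars F" using T(2) by (auto simp: mpoly_vars_def)
  have \<tau>_less: "\<tau> j < 2 ^ n" if "j < r" for j
  proof -
    have "\<tau> j \<in> mpoly_vars F" using that T_vars T_eq by blast
    then show ?thesis using vars by auto
  qed
  define \<psi> where "\<psi> = mpoly_subst (sssv_specialization n k r \<tau> :: nat \<Rightarrow> 'a mpoly)"
  define g where "g t = \<psi> (if t < 2 ^ n then G_SSSV n k (set_of_index n t) else 0)" for t
  have "\<psi> (gen_compose n (G_SSSV n k) F) = mpoly_subst g F"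
    unfolding gen_compose_def g_def \<psi>_def
    by (rule ring_hom_mpoly_subst_commute[OF ring_hom_mpoly_subst mpoly_subst_mConst])
  moreover have "g (\<tau> j) = mVar j" if "j < r" for j
  proof -
    have "{j'. j' < r \<and> \<tau> j' = \<tau> j} = {j}" using inj that by (auto dest: inj_onD)
    then show ?thesis
      using that \<tau>_less unfolding g_def \<psi>_def
      by (simp add: mpoly_subst_sssv_specialization_G_SSSV[OF \<open>r \<le> k\<close>])
  qed
  moreover have "g t = 1" if "t \<in> mpoly_vars F" "t \<notin> \<tau> ` {..<r}" for t
  proof -
    have "t < 2 ^ n" using that(1) vars by auto
    moreover have "{j. j < r \<and> \<tau> j = t} = {}" using that(2) by auto
    ultimately show ?thesis
      unfolding g_def \<psi>_def
      by (simp only: mpoly_subst_sssv_specialization_G_SSSV[OF \<open>r \<le> k\<close> \<tau>_less] if_True sum.empty add_0)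
  qed
  moreover have "{m\<in>Poly_Mapping.keys F. \<forall>t\<in>\<tau> ` {..<r}. Poly_Mapping.lookup m t = Poly_Mapping.lookup m0 t} =
      {m\<in>Poly_Mapping.keys F. \<forall>j<r. Poly_Mapping.lookup m (\<tau> j) = Poly_Mapping.lookup m0 (\<tau> j)}"
    by auto
  ultimately have "Poly_Mapping.lookup (\<psi> (gen_compose n (G_SSSV n k) F))
      (\<Sum>j<r. Poly_Mapping.single j (Poly_Mapping.lookup m0 (\<tau> j))) \<noteq> 0"
    using isolated lookup_mpoly_subst_projection[OF inj, of g F m0] unfolding T_eq by simp
  then show ?thesis
    unfolding \<psi>_def by auto
qed

lemma le_two_power_ceiling_log:
  assumes "1 \<le> s"
  shows "s \<le> 2 ^ nat \<lceil>log 2 (real s)\<rceil>"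
proof (rule ccontr)
  assume "\<not> ?thesis"
  then have "real (nat \<lceil>log 2 (real s)\<rceil>) < log 2 (real s)"
    by (intro less_log2_of_power) simp
  moreover have "0 \<le> log 2 (real s)" using assms by simp
  ultimately show False by linarith
qed

lemma succinct_generator_mono:
  "succinct_generator n m G s' D \<Longrightarrow> s' \<le> s'' \<Longrightarrow> succinct_generator n m G s'' D"
  unfolding succinct_generator_def by (meson order.trans)

lemma succinct_generator_G_SSSV:
  assumes "s \<le> 2 ^ k"
  shows "succinct_generator n (k + k * n) (G_SSSV n k :: nat set \<Rightarrow> 'a::comm_ring_1 mpoly)
    (real ((k + 1) * (2 * n + 2))) (sparse_class (2 ^ n) s)"
  unfolding succinct_generator_def
proof (intro conjI allI impI ballI)
  show "\<exists>\<Phi>. sps_multilinear \<Phi> \<and> real (sps_size \<Phi>) \<le> real ((k + 1) * (2 * n + 2)) \<and>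
      sps_poly \<Phi> = (\<Sum>S\<in>Pow {0..<n}. mConst (mpoly_eval \<alpha> (G_SSSV n k S)) * (\<Prod>i\<in>S. mVar i))"
    for \<alpha> :: "nat \<Rightarrow> 'a"
    using sps_size_sssv_formula[of \<alpha> n k]
    by (intro exI[of _ "sssv_formula \<alpha> n k"] conjI sps_multilinear_sssv_formula sps_poly_sssv_formula)
      (simp only: of_nat_le_iff)
  show "F \<noteq> 0 \<longleftrightarrow> gen_compose n (G_SSSV n k) F \<noteq> 0" if "F \<in> sparse_class (2 ^ n) s" for F :: "'a mpoly"
    using that assms gen_compose_G_SSSV_nonzero[of F n k]
    by (auto simp: sparse_class_def gen_compose_def)
qed (rule mpoly_vars_G_SSSV)

theorem corollary5p10:
  "\<exists>p :: real mpoly. \<forall>n s :: nat. n \<ge> 1 \<longrightarrow> s \<ge> 1 \<longrightarrow>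
     (let k = nat \<lceil>log 2 (real s)\<rceil> in
      succinct_generator n (k + k * n) (G_SSSV n k :: nat set \<Rightarrow> ('a::field) mpoly)
        (mpoly_eval ((\<lambda>_. 0)(0 := log 2 (real s), 1 := real n)) p)
        (sparse_class (2 ^ n) s))"
proof (intro exI[of _ "(mVar 0 + mConst 2) * (mConst 2 * mVar 1 + mConst 2)"] allI impI)
  fix n s :: nat
  assume "n \<ge> 1" "s \<ge> 1"
  define k where "k = nat \<lceil>log 2 (real s)\<rceil>"
  have "real k \<le> log 2 (real s) + 1"
    using \<open>s \<ge> 1\<close> unfolding k_def by (simp add: of_int_ceiling_le_add_one)
  have "real ((k + 1) * (2 * n + 2)) = (real k + 1) * (2 * real n + 2)"
    by (simp add: algebra_simps)
  also have "\<dots> \<le> (log 2 (real s) + 2) * (2 * real n + 2)"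
    using \<open>real k \<le> log 2 (real s) + 1\<close> by (intro mult_right_mono) auto
  finally have "succinct_generator n (k + k * n) (G_SSSV n k :: nat set \<Rightarrow> 'a mpoly)
      ((log 2 (real s) + 2) * (2 * real n + 2)) (sparse_class (2 ^ n) s)"
    using succinct_generator_G_SSSV[OF le_two_power_ceiling_log[OF \<open>s \<ge> 1\<close>]]
    unfolding k_def[symmetric] by (rule succinct_generator_mono[rotated])
  then show "let k = nat \<lceil>log 2 (real s)\<rceil> in
      succinct_generator n (k + k * n) (G_SSSV n k :: nat set \<Rightarrow> 'a mpoly)
        (mpoly_eval ((\<lambda>_. 0)(0 := log 2 (real s), 1 := real n))
          ((mVar 0 + mConst 2) * (mConst 2 * mVar 1 + mConst 2)))
        (sparse_class (2 ^ n) s)"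
    by (simp add: k_def Let_def ring_hom.hom_simps[OF ring_hom_mpoly_eval] algebra_simps)
qed

end
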